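(* Let $\bar x\in\Phi$ be a local second-order weak sharp minimizer of problem (P) with corresponding constants $\kappa>0$ and $\delta>0$. Then for every $x\in S\cap B_\delta(\bar x)$, every $d\in C(x)$, and every $\lambda\in\mathbb{R}^m$ with $\nabla_xL(x,\lambda)=0$, one has (i) $\sigma_{\nabla g(x)(T''_\Phi(x;d))}(\lambda)\le0$; (ii) $\nabla^2_{xx}L(x,\lambda)(d,d)-\sigma_{\nabla g(x)(T^2_\Phi(x;d))+\nabla^2g(x)(d,d)}(\lambda)\ge 2\kappa\,[\mathrm{dist}(d,T_S(x))]^2$.
   Context: Standing setting: $f:\mathbb{R}^n\to\mathbb{R}$ and $g:\mathbb{R}^n\to\mathbb{R}^m$ are twice continuously differentiable, $K\subset\mathbb{R}^m$ is closed, and (P) is the problem $\min f(x)$ s.t. $g(x)\in K$. $\Phi:=\{x: g(x)\in K\}$ and $S$ is the (nonempty) set of optimal solutions of (P). $L(x,\lambda):=f(x)+\langle g(x),\lambda\rangle$. $\bar x\in\Phi$ is a local second-order weak sharp minimizer with constants $\kappa,\delta>0$ if $f(x)\ge f(\bar x)+\kappa[\mathrm{dist}(x,S)]^2$ for all $x\in\Phi\cap B_\delta(\bar x)$. For a closed set $A$ and $\bar x\in A$: $T_A(\bar x):=\{d:\exists t_k\downarrow0,d_k\to d,\ \bar x+t_kd_k\in A\}$; for $d\in T_A(\bar x)$, $T^2_A(\bar x;d):=\{w:\exists t_k\downarrow0,w_k\to w,\ \bar x+t_kd+\tfrac12t_k^2w_k\in A\}$ and $T''_A(\bar x;d):=\{w:\exists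 (t_k,r_k)\downarrow(0,0),\ t_k/r_k\to0,\ w_k\to w,\ \bar x+t_kd+\tfrac12t_kr_kw_k\in A\}$. $C(x):=\{d:\nabla g(x)d\in T_K(g(x)),\ \nabla f(x)d\le0\}$. $\sigma_A(\lambda):=\sup_{u\in A}\langle\lambda,u\rangle$ ($-\infty$ if $A=\emptyset$). $\nabla^2g(x)(d,d):=(d^T\nabla^2g_i(x)d)_{i=1}^m$, $\nabla g(x)(A):=\{\nabla g(x)u:u\in A\}$. *)

theory Defs
  imports "HOL-Analysis.Analysis"
begin

definition tangent_cone :: "'a::real_normed_vector set \<Rightarrow> 'a \<Rightarrow> 'a set" where
  "tangent_cone A x = {d. \<exists>t dk. (\<forall>k. t k > 0) \<and> t \<longlonglongrightarrow> 0 \<and> dk \<longlonglongrightarrow> d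
      \<and> (\<forall>k. x + t k *\<^sub>R dk k \<in> A)}"

definition second_tangent_set :: "'a::real_normed_vector set \<Rightarrow> 'a \<Rightarrow> 'a \<Rightarrow> 'a set" where
  "second_tangent_set A x d = {w. \<exists>t wk. (\<forall>k. t k > 0) \<and> t \<longlonglongrightarrow> 0 \<and> wk \<longlonglongrightarrow> w
      \<and> (\<forall>k. x + t k *\<^sub>R d + (1/2 * (t k)\<^sup>2) *\<^sub>R wk k \<in> A)}"

definition asymp_second_tangent_cone :: "'a::real_normed_vector set \<Rightarrow> 'a \<Rightarrow> 'a \<Rightarrow> 'a set" where
  "asymp_second_tangent_cone A x d = {w. \<exists>t r wk. (\<forall>k. t k > 0) \<and> (\<forall>k. r k > 0)
      \<and> t \<longlonglongrightarrow> 0 \<and> r \<longlonglongrightarrow> 0 \<and> (\<lambda>k. t k / r k) \<longlonglongrightarrow> 0 \<and> wk \<longlonglongrightarrow> w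
      \<and> (\<forall>k. x + t k *\<^sub>R d + (1/2 * t k * r k) *\<^sub>R wk k \<in> A)}"

text \<open>Support function, with value -\<infinity> on the empty set.\<close>
definition support_fun :: "'a::real_inner set \<Rightarrow> 'a \<Rightarrow> ereal" where
  "support_fun A l = (SUP u\<in>A. ereal (l \<bullet> u))"

definition so_weak_sharp_min ::
  "('n \<Rightarrow> real) \<Rightarrow> 'n::real_normed_vector set \<Rightarrow> 'n set \<Rightarrow> 'n \<Rightarrow> real \<Rightarrow> real \<Rightarrow> bool" where
  "so_weak_sharp_min f Phi S xb \<kappa> \<delta> \<longleftrightarrow> xb \<in> Phi \<and> \<kappa> > 0 \<and> \<delta> > 0 \<and>
     (\<forall>x \<in> Phi \<inter> ball xb \<delta>. f x \<ge> f xb + \<kappa> * (infdist x S)\<^sup>2)"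

end

theory Submission
  imports Defs
begin

(*
  Since Df(x) = -Dg(x)^T l, both support functions are suprema of -Df(x) w over second-order
  tangent sets of Phi, so the theorem consists of two second-order necessary conditions for f on
  the set Phi.

  A vector w of T''(x;d) or T^2(x;d) comes with feasible points p_k = x + t_k d + 1/2 t_k r_k w_k
  (with r_k = t_k for T^2). Expanding f to second order along p_k and using f(p_k) >= f(x) first
  gives Df(x) d >= 0, hence Df(x) d = 0, and then
    0 <= (f(p_k) - f(x)) / (1/2 t_k r_k) --> Df(x) w   when t_k / r_k --> 0,
  which is (i). For (ii), x inherits the sharpness inequality from xb because f(x) <= f(xb), so
  the limit 1/2 (D2f(x)(d,d) + Df(x) w) of (f(p_k) - f(x)) / t_k^2 dominates
  kappa dist(p_k,S)^2 / t_k^2. Finally, any limit of dist(p_k,S) / t_k bounds dist(d, T_S(x)):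
  for near-optimal s_k in S the quotients (s_k - x) / t_k are bounded, and a convergent
  subsequence of them has its limit in T_S(x).
*)

lemma Taylor_Lagrange_second_order:
  fixes f :: "'a::real_normed_vector \<Rightarrow> real"
  assumes f_D: "\<And>x. (f has_derivative blinfun_apply (Df x)) (at x)"
    and f_D2: "\<And>x. (Df has_derivative blinfun_apply (D2f x)) (at x)"
  obtains s where "0 < s" "s < 1" "f (x + h) = f x + Df x h + 1/2 * D2f (x + s *\<^sub>R h) h h"
proof -
  \<comment> \<open>the derivatives of order 0, 1, 2 of \<open>s \<mapsto> f (x + s *\<^sub>R h)\<close>, in the form \<open>Maclaurin\<close> expects\<close>
  define F where "F m s = (if m = 0 then f (x + s *\<^sub>R h)
      else if m = 1 then Df (x + s *\<^sub>R h) h else D2f (x + s *\<^sub>R h) h h)" for m :: nat and s :: real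
  have F0: "DERIV (F 0) s :> F 1 s" for s
  proof -
    have "((\<lambda>s. f (x + s *\<^sub>R h)) has_derivative (\<lambda>u. Df (x + s *\<^sub>R h) (u *\<^sub>R h))) (at s)"
      by (rule has_derivative_compose[OF _ f_D]) (auto intro!: derivative_eq_intros)
    then show ?thesis
      by (simp add: F_def[abs_def] has_field_derivative_def blinfun.scaleR_right mult_commute_abs)
  qed
  have F1: "DERIV (F 1) s :> F 2 s" for s
  proof -
    have "((\<lambda>s. Df (x + s *\<^sub>R h)) has_derivative (\<lambda>u. D2f (x + s *\<^sub>R h) (u *\<^sub>R h))) (at s)"
      by (rule has_derivative_compose[OF _ f_D2]) (auto intro!: derivative_eq_intros)
    then have "((\<lambda>s. Df (x + s *\<^sub>R h) h) has_derivative (\<lambda>u. D2f (x + s *\<^sub>R h) (u *\<^sub>R h) h)) (at s)"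
      by (auto intro!: derivative_eq_intros)
    then show ?thesis
      by (simp add: F_def[abs_def] has_field_derivative_def blinfun.scaleR_right blinfun.scaleR_left mult_commute_abs)
  qed
  have "\<exists>s. 0 < s \<and> s < 1 \<and> F 0 1 = (\<Sum>m<2. F m 0 / fact m * 1 ^ m) + F 2 s / fact 2 * 1 ^ 2"
    by (rule Maclaurin) (use F0 F1 less_2_cases in \<open>auto simp: numeral_2_eq_2\<close>)
  then show ?thesis
    using that by (auto simp: F_def numeral_2_eq_2)
qed

locale C2_real_function =
  fixes f :: "'a::real_normed_vector \<Rightarrow> real"
    and Df :: "'a \<Rightarrow> 'a \<Rightarrow>\<^sub>L real"
    and D2f :: "'a \<Rightarrow> 'a \<Rightarrow>\<^sub>L 'a \<Rightarrow>\<^sub>L real"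
  assumes f_D: "\<And>x. (f has_derivative blinfun_apply (Df x)) (at x)"
    and f_D2: "\<And>x. (Df has_derivative blinfun_apply (D2f x)) (at x)"
    and f_C2: "continuous_on UNIV D2f"
begin

lemma second_difference_quotient_tendsto:
  assumes t: "t \<longlonglongrightarrow> 0" "\<And>k. t k > 0" and a: "a \<longlonglongrightarrow> a0"
  shows "(\<lambda>k. (f (x + t k *\<^sub>R a k) - f x - t k * Df x (a k)) / (t k)\<^sup>2) \<longlonglongrightarrow> 1/2 * D2f x a0 a0"
proof -
  have "\<exists>s. 0 < s \<and> s < 1 \<and> f (x + t k *\<^sub>R a k) = f x + Df x (t k *\<^sub>R a k)
       + 1/2 * D2f (x + s *\<^sub>R t k *\<^sub>R a k) (t k *\<^sub>R a k) (t k *\<^sub>R a k)"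
    for k using Taylor_Lagrange_second_order[OF f_D f_D2, of x "t k *\<^sub>R a k"] by blast
  then obtain s where s: "\<And>k. 0 < s k" "\<And>k. s k < 1" and
    expand: "\<And>k. f (x + t k *\<^sub>R a k) = f x + Df x (t k *\<^sub>R a k)
       + 1/2 * D2f (x + s k *\<^sub>R t k *\<^sub>R a k) (t k *\<^sub>R a k) (t k *\<^sub>R a k)"
    by metis
  define \<xi> where "\<xi> k = x + s k *\<^sub>R t k *\<^sub>R a k" for k
  have quotient: "(f (x + t k *\<^sub>R a k) - f x - t k * Df x (a k)) / (t k)\<^sup>2 = 1/2 * D2f (\<xi> k) (a k) (a k)" for k
  proof -
    have "f (x + t k *\<^sub>R a k) - f x - t k * Df x (a k) = (t k)\<^sup>2 * (1/2 * D2f (\<xi> k) (a k) (a k))"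
      unfolding expand \<xi>_def[symmetric]
      by (simp add: blinfun.scaleR_right blinfun.scaleR_left power2_eq_square)
    then show ?thesis
      using t(2)[of k] by simp
  qed
  have "(\<lambda>k. s k *\<^sub>R t k *\<^sub>R a k) \<longlonglongrightarrow> 0"
  proof (rule Lim_null_comparison)
    show "\<forall>\<^sub>F k in sequentially. norm (s k *\<^sub>R t k *\<^sub>R a k) \<le> norm (t k *\<^sub>R a k)"
    proof (intro always_eventually allI)
      fix k
      have "\<bar>s k\<bar> * \<bar>t k\<bar> \<le> \<bar>t k\<bar>"
        using s[of k] by (intro mult_left_le_one_le) auto
      then show "norm (s k *\<^sub>R t k *\<^sub>R a k) \<le> norm (t k *\<^sub>R a k)"
        by (simp add: abs_mult mult_right_mono)
    qed
    have "(\<lambda>k. t k *\<^sub>R a k) \<longlonglongrightarrow> 0"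
      using tendsto_scaleR[OF t(1) a] by simp
    then show "(\<lambda>k. norm (t k *\<^sub>R a k)) \<longlonglongrightarrow> 0"
      by (rule tendsto_norm_zero)
  qed
  from tendsto_add[OF tendsto_const[of x] this] have "\<xi> \<longlonglongrightarrow> x"
    by (simp add: \<xi>_def[abs_def])
  moreover have "isCont D2f x"
    using f_C2 by (simp add: continuous_on_eq_continuous_at)
  ultimately have "(\<lambda>k. D2f (\<xi> k)) \<longlonglongrightarrow> D2f x"
    by (simp add: isCont_tendsto_compose)
  then show ?thesis
    unfolding quotient by (intro tendsto_mult_left blinfun.tendsto a)
qed

lemma arc_difference_quotient_tendsto:
  assumes t: "t \<longlonglongrightarrow> 0" "\<And>k. t k > 0" and r: "r \<longlonglongrightarrow> 0" and w: "wk \<longlonglongrightarrow> w"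
  shows "(\<lambda>k. (f (x + t k *\<^sub>R d + (1/2 * t k * r k) *\<^sub>R wk k) - f x
      - t k * Df x d - 1/2 * t k * r k * Df x (wk k)) / (t k)\<^sup>2) \<longlonglongrightarrow> 1/2 * D2f x d d"
proof -
  define v where "v k = d + (1/2 * r k) *\<^sub>R wk k" for k
  have "v \<longlonglongrightarrow> d + (1/2 * 0) *\<^sub>R w"
    unfolding v_def[abs_def] by (intro tendsto_intros r w)
  then have v: "v \<longlonglongrightarrow> d"
    by simp
  have arc: "x + t k *\<^sub>R v k = x + t k *\<^sub>R d + (1/2 * t k * r k) *\<^sub>R wk k"
    and Dv: "t k * Df x (v k) = t k * Df x d + 1/2 * t k * r k * Df x (wk k)" for k
    by (simp_all add: v_def algebra_simps blinfun.add_right blinfun.scaleR_right)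
  from second_difference_quotient_tendsto[OF t v, of x] show ?thesis
    by (simp only: arc Dv diff_diff_eq add.assoc)
qed

lemma arc_derivative_nonneg:
  assumes t: "t \<longlonglongrightarrow> 0" "\<And>k. t k > 0" and r: "r \<longlonglongrightarrow> 0" and w: "wk \<longlonglongrightarrow> w"
    and ge: "\<And>k. f x \<le> f (x + t k *\<^sub>R d + (1/2 * t k * r k) *\<^sub>R wk k)"
  shows "0 \<le> Df x d"
proof -
  define Q where "Q k = (f (x + t k *\<^sub>R d + (1/2 * t k * r k) *\<^sub>R wk k) - f x
      - t k * Df x d - 1/2 * t k * r k * Df x (wk k)) / (t k)\<^sup>2" for k
  have "Q \<longlonglongrightarrow> 1/2 * D2f x d d"
    unfolding Q_def[abs_def] by (rule arc_difference_quotient_tendsto[OF t r w])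
  then have "(\<lambda>k. Df x d + 1/2 * r k * Df x (wk k) + t k * Q k)
      \<longlonglongrightarrow> Df x d + 1/2 * 0 * Df x w + 0 * (1/2 * D2f x d d)"
    by (intro tendsto_intros t r w)
  moreover have "0 \<le> Df x d + 1/2 * r k * Df x (wk k) + t k * Q k" for k
  proof -
    have "t k * (Df x d + 1/2 * r k * Df x (wk k) + t k * Q k)
        = f (x + t k *\<^sub>R d + (1/2 * t k * r k) *\<^sub>R wk k) - f x"
      using t(2)[of k] by (simp add: Q_def field_simps power2_eq_square)
    then have "0 \<le> t k * (Df x d + 1/2 * r k * Df x (wk k) + t k * Q k)"
      using ge[of k] by simp
    then show ?thesis
      using t(2)[of k] by (simp add: zero_le_mult_iff)
  qed
  ultimately show ?thesis
    by (intro LIMSEQ_le_const) auto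
qed

lemma minimizer_asymp_second_tangent_derivative_nonneg:
  assumes min: "\<And>y. y \<in> Phi \<Longrightarrow> f x \<le> f y" and "Df x d \<le> 0"
    and "w \<in> asymp_second_tangent_cone Phi x d"
  shows "0 \<le> Df x w"
proof -
  obtain t r wk where t: "t \<longlonglongrightarrow> 0" "\<And>k. t k > 0" and r: "r \<longlonglongrightarrow> 0" "\<And>k. r k > 0"
    and tr: "(\<lambda>k. t k / r k) \<longlonglongrightarrow> 0" and w: "wk \<longlonglongrightarrow> w"
    and feasible: "\<And>k. x + t k *\<^sub>R d + (1/2 * t k * r k) *\<^sub>R wk k \<in> Phi"
    using \<open>w \<in> asymp_second_tangent_cone Phi x d\<close> unfolding asymp_second_tangent_cone_def by blast
  have ge: "f x \<le> f (x + t k *\<^sub>R d + (1/2 * t k * r k) *\<^sub>R wk k)" for k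
    using min feasible by blast
  have "Df x d = 0"
    using arc_derivative_nonneg[OF t r(1) w ge] \<open>Df x d \<le> 0\<close> by simp
  define Q where "Q k = (f (x + t k *\<^sub>R d + (1/2 * t k * r k) *\<^sub>R wk k) - f x
      - 1/2 * t k * r k * Df x (wk k)) / (t k)\<^sup>2" for k
  have "Q \<longlonglongrightarrow> 1/2 * D2f x d d"
    using arc_difference_quotient_tendsto[OF t r(1) w, of x d]
    by (simp add: Q_def[abs_def] \<open>Df x d = 0\<close>)
  then have "(\<lambda>k. Df x (wk k) + 2 * (t k / r k) * Q k) \<longlonglongrightarrow> Df x w + 2 * 0 * (1/2 * D2f x d d)"
    by (intro tendsto_intros tr w)
  moreover have "0 \<le> Df x (wk k) + 2 * (t k / r k) * Q k" for k
  proof -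
    have "(1/2 * t k * r k) * (Df x (wk k) + 2 * (t k / r k) * Q k)
        = f (x + t k *\<^sub>R d + (1/2 * t k * r k) *\<^sub>R wk k) - f x"
      using t(2)[of k] r(2)[of k] by (simp add: Q_def field_simps power2_eq_square)
    then have "0 \<le> (1/2 * t k * r k) * (Df x (wk k) + 2 * (t k / r k) * Q k)"
      using ge[of k] by simp
    then show ?thesis
      using mult_pos_pos[OF t(2)[of k] r(2)[of k]] by (simp add: zero_le_mult_iff)
  qed
  ultimately show ?thesis
    by (intro LIMSEQ_le_const) auto
qed

end

lemma infdist_lessE:
  assumes "A \<noteq> {}" "infdist y A < e"
  obtains a where "a \<in> A" "dist y a < e"
proof -
  have "(INF a\<in>A. dist y a) < e"
    using assms by (simp add: infdist_notempty)
  moreover have "bdd_below ((\<lambda>a. dist y a) ` A)"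
    by (rule bdd_belowI[of _ 0]) auto
  ultimately show ?thesis
    using that cINF_less_iff[OF assms(1)] by blast
qed

lemma infdist_tangent_cone_le:
  fixes S :: "'a::{real_normed_vector,heine_borel} set"
  assumes t: "t \<longlonglongrightarrow> 0" "\<And>k. t k > 0" and v: "v \<longlonglongrightarrow> d"
    and near: "\<And>k. \<exists>s\<in>S. dist (x + t k *\<^sub>R v k) s \<le> t k * \<rho>"
  shows "infdist d (tangent_cone S x) \<le> \<rho>"
proof -
  obtain s where s: "\<And>k. s k \<in> S" "\<And>k. dist (x + t k *\<^sub>R v k) (s k) \<le> t k * \<rho>"
    using near by metis
  define u where "u k = (1 / t k) *\<^sub>R (s k - x)" for k
  have su: "s k = x + t k *\<^sub>R u k" for k
    using t(2)[of k] by (simp add: u_def)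
  have vu: "dist (v k) (u k) \<le> \<rho>" for k
  proof -
    have "t k * dist (v k) (u k) = dist (x + t k *\<^sub>R v k) (s k)"
      using t(2)[of k] by (simp add: su dist_norm flip: scaleR_diff_right)
    then have "t k * dist (v k) (u k) \<le> t k * \<rho>"
      using s(2)[of k] by simp
    then show ?thesis
      using t(2)[of k] by simp
  qed
  obtain B where B: "\<And>k. norm (v k) \<le> B"
    using convergent_imp_Bseq[of v] v by (auto simp: convergent_def elim!: BseqE)
  have "u k \<in> cball 0 (B + \<rho>)" for k
    using B[of k] vu[of k] norm_triangle_ineq3[of "u k" "v k"]
    by (simp add: dist_norm norm_minus_commute)
  then obtain u0 r where r: "strict_mono r" "(u \<circ> r) \<longlonglongrightarrow> u0"
    using compact_imp_seq_compact[OF compact_cball] by (metis seq_compactE)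
  have "(t \<circ> r) \<longlonglongrightarrow> 0" "(v \<circ> r) \<longlonglongrightarrow> d"
    using LIMSEQ_subseq_LIMSEQ[OF _ r(1)] t(1) v by auto
  have "u0 \<in> tangent_cone S x"
    unfolding tangent_cone_def
    using \<open>(t \<circ> r) \<longlonglongrightarrow> 0\<close> r(2) s(1) t(2)
    by (auto intro!: exI[of _ "t \<circ> r"] exI[of _ "u \<circ> r"] simp: su[symmetric])
  then have "infdist d (tangent_cone S x) \<le> dist d u0"
    by (rule infdist_le)
  also have "dist d u0 \<le> \<rho>"
    using vu by (intro LIMSEQ_le_const2[OF tendsto_dist[OF \<open>(v \<circ> r) \<longlonglongrightarrow> d\<close> r(2)]]) auto
  finally show ?thesis .
qed

lemma infdist_tangent_cone_le_limit:
  fixes S :: "'a::{real_normed_vector,heine_borel} set"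
  assumes "S \<noteq> {}" and t: "t \<longlonglongrightarrow> 0" "\<And>k. t k > 0" and v: "v \<longlonglongrightarrow> d" and q: "q \<longlonglongrightarrow> \<rho>"
    and near: "\<forall>\<^sub>F k in sequentially. infdist (x + t k *\<^sub>R v k) S \<le> t k * q k"
  shows "infdist d (tangent_cone S x) \<le> \<rho>"
proof (rule field_le_epsilon)
  fix e :: real assume "e > 0"
  have "\<forall>\<^sub>F k in sequentially. q k < \<rho> + e"
    using q \<open>e > 0\<close> by (intro order_tendstoD) auto
  with near have "\<forall>\<^sub>F k in sequentially. \<exists>s\<in>S. dist (x + t k *\<^sub>R v k) s \<le> t k * (\<rho> + e)"
  proof eventually_elim
    case (elim k)
    then have "infdist (x + t k *\<^sub>R v k) S < t k * (\<rho> + e)"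
      using mult_strict_left_mono[OF elim(2) t(2)[of k]] elim(1) by linarith
    then show ?case
      using \<open>S \<noteq> {}\<close> by (metis infdist_lessE less_imp_le)
  qed
  then obtain N where "\<And>k. k \<ge> N \<Longrightarrow> \<exists>s\<in>S. dist (x + t k *\<^sub>R v k) s \<le> t k * (\<rho> + e)"
    by (auto simp: eventually_sequentially)
  then show "infdist d (tangent_cone S x) \<le> \<rho> + e"
    using t v by (intro infdist_tangent_cone_le[of "\<lambda>k. t (k + N)" "\<lambda>k. v (k + N)"])
      (auto intro: LIMSEQ_ignore_initial_segment)
qed

lemma infdist_tangent_cone_sq_le_limit:
  fixes S :: "'a::{real_normed_vector,heine_borel} set"
  assumes "S \<noteq> {}" "\<kappa> > 0" and t: "t \<longlonglongrightarrow> 0" "\<And>k. t k > 0" and v: "v \<longlonglongrightarrow> d" and A: "A \<longlonglongrightarrow> L"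
    and near: "\<forall>\<^sub>F k in sequentially. \<kappa> * (infdist (x + t k *\<^sub>R v k) S)\<^sup>2 \<le> (t k)\<^sup>2 * A k"
  shows "\<kappa> * (infdist d (tangent_cone S x))\<^sup>2 \<le> L"
proof -
  from near have "\<forall>\<^sub>F k in sequentially. infdist (x + t k *\<^sub>R v k) S \<le> t k * sqrt (A k / \<kappa>)"
  proof (rule eventually_mono)
    fix k assume "\<kappa> * (infdist (x + t k *\<^sub>R v k) S)\<^sup>2 \<le> (t k)\<^sup>2 * A k"
    then have "(infdist (x + t k *\<^sub>R v k) S)\<^sup>2 \<le> (t k)\<^sup>2 * (A k / \<kappa>)"
      using \<open>\<kappa> > 0\<close> by (simp add: field_simps)
    then have "infdist (x + t k *\<^sub>R v k) S \<le> sqrt ((t k)\<^sup>2 * (A k / \<kappa>))"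
      by (rule real_le_rsqrt)
    also have "\<dots> = t k * sqrt (A k / \<kappa>)"
      using t(2)[of k] by (simp only: real_sqrt_mult real_sqrt_abs abs_of_pos)
    finally show "infdist (x + t k *\<^sub>R v k) S \<le> t k * sqrt (A k / \<kappa>)" .
  qed
  then have "infdist d (tangent_cone S x) \<le> sqrt (L / \<kappa>)"
    using \<open>S \<noteq> {}\<close> \<open>\<kappa> > 0\<close> t v A by (intro infdist_tangent_cone_le_limit) (auto intro!: tendsto_intros)
  then have "(infdist d (tangent_cone S x))\<^sup>2 \<le> L / \<kappa>"
    using infdist_nonneg by (metis power_mono real_sqrt_ge_0_iff real_sqrt_pow2 order.trans)
  then show ?thesis
    using \<open>\<kappa> > 0\<close> by (simp add: field_simps)
qed

lemma sharp_minimizer_second_tangent_bound: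
  fixes f :: "'a::{real_normed_vector,heine_borel} \<Rightarrow> real"
  assumes "C2_real_function f Df D2f"
    and min: "\<And>y. y \<in> Phi \<Longrightarrow> f x \<le> f y" and "Df x d \<le> 0"
    and "open U" "x \<in> U" and sharp: "\<And>y. y \<in> Phi \<inter> U \<Longrightarrow> f x + \<kappa> * (infdist y S)\<^sup>2 \<le> f y"
    and "\<kappa> > 0" "S \<noteq> {}"
    and "w \<in> second_tangent_set Phi x d"
  shows "2 * \<kappa> * (infdist d (tangent_cone S x))\<^sup>2 \<le> D2f x d d + Df x w"
proof -
  interpret C2_real_function f Df D2f by fact
  obtain t wk where t: "t \<longlonglongrightarrow> 0" "\<And>k. t k > 0" and w: "wk \<longlonglongrightarrow> w"
    and feasible: "\<And>k. x + t k *\<^sub>R d + (1/2 * (t k)\<^sup>2) *\<^sub>R wk k \<in> Phi"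
    using \<open>w \<in> second_tangent_set Phi x d\<close> unfolding second_tangent_set_def by blast
  define v where "v k = d + (1/2 * t k) *\<^sub>R wk k" for k
  define p where "p k = x + t k *\<^sub>R v k" for k
  have p_arc: "p k = x + t k *\<^sub>R d + (1/2 * t k * t k) *\<^sub>R wk k" for k
    by (simp add: p_def v_def algebra_simps)
  have "p k \<in> Phi" for k
    using feasible[of k] by (simp add: p_arc power2_eq_square)
  then have ge: "f x \<le> f (p k)" for k
    using min by blast
  have "Df x d = 0"
    using arc_derivative_nonneg[OF t t(1) w, of x d] ge \<open>Df x d \<le> 0\<close> by (simp add: p_arc)
  define A where "A k = (f (p k) - f x) / (t k)\<^sup>2" for k
  have "(\<lambda>k. (f (p k) - f x - 1/2 * t k * t k * Df x (wk k)) / (t k)\<^sup>2 + 1/2 * Df x (wk k))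
      \<longlonglongrightarrow> 1/2 * D2f x d d + 1/2 * Df x w"
    using arc_difference_quotient_tendsto[OF t t(1) w, of x d] w
    by (intro tendsto_intros) (simp_all add: p_arc \<open>Df x d = 0\<close>)
  moreover have "(f (p k) - f x - 1/2 * t k * t k * Df x (wk k)) / (t k)\<^sup>2 + 1/2 * Df x (wk k) = A k" for k
    using t(2)[of k] by (simp add: A_def field_simps power2_eq_square)
  ultimately have A: "A \<longlonglongrightarrow> 1/2 * (D2f x d d + Df x w)"
    by (simp add: algebra_simps)
  have "v \<longlonglongrightarrow> d + (1/2 * 0) *\<^sub>R w"
    unfolding v_def[abs_def] by (intro tendsto_intros t(1) w)
  then have v: "v \<longlonglongrightarrow> d"
    by simp
  have "p \<longlonglongrightarrow> x"
    using tendsto_add[OF tendsto_const[of x] tendsto_scaleR[OF t(1) v]] by (simp add: p_def[abs_def])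
  then have "\<forall>\<^sub>F k in sequentially. p k \<in> U"
    using \<open>open U\<close> \<open>x \<in> U\<close> by (rule topological_tendstoD)
  then have "\<forall>\<^sub>F k in sequentially. \<kappa> * (infdist (x + t k *\<^sub>R v k) S)\<^sup>2 \<le> (t k)\<^sup>2 * A k"
  proof (rule eventually_mono)
    fix k assume "p k \<in> U"
    then show "\<kappa> * (infdist (x + t k *\<^sub>R v k) S)\<^sup>2 \<le> (t k)\<^sup>2 * A k"
      using sharp[of "p k"] \<open>p k \<in> Phi\<close> t(2)[of k] by (simp add: A_def p_def)
  qed
  then have "\<kappa> * (infdist d (tangent_cone S x))\<^sup>2 \<le> 1/2 * (D2f x d d + Df x w)"
    by (rule infdist_tangent_cone_sq_le_limit[OF \<open>S \<noteq> {}\<close> \<open>\<kappa> > 0\<close> t v A])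
  then show ?thesis
    by simp
qed

theorem theorem3p3:
  fixes f :: "real^'n \<Rightarrow> real"
    and Df :: "real^'n \<Rightarrow> ((real^'n) \<Rightarrow>\<^sub>L real)"
    and D2f :: "real^'n \<Rightarrow> ((real^'n) \<Rightarrow>\<^sub>L ((real^'n) \<Rightarrow>\<^sub>L real))"
    and g :: "real^'n \<Rightarrow> real^'m"
    and Dg :: "real^'n \<Rightarrow> ((real^'n) \<Rightarrow>\<^sub>L (real^'m))"
    and D2g :: "real^'n \<Rightarrow> ((real^'n) \<Rightarrow>\<^sub>L ((real^'n) \<Rightarrow>\<^sub>L (real^'m)))"
    and K :: "(real^'m) set" and Phi S :: "(real^'n) set"
    and xb :: "real^'n" and \<kappa> \<delta> :: real
  assumes f_D: "\<And>x. (f has_derivative blinfun_apply (Df x)) (at x)"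
    and f_D2: "\<And>x. (Df has_derivative blinfun_apply (D2f x)) (at x)"
    and f_C2: "continuous_on UNIV D2f"
    and g_D: "\<And>x. (g has_derivative blinfun_apply (Dg x)) (at x)"
    and g_D2: "\<And>x. (Dg has_derivative blinfun_apply (D2g x)) (at x)"
    and g_C2: "continuous_on UNIV D2g"
    and K_closed: "closed K"
    and Phi_def: "Phi = {x. g x \<in> K}"
    and S_def: "S = {x \<in> Phi. \<forall>y \<in> Phi. f x \<le> f y}"
    and S_ne: "S \<noteq> {}"
    and wsm: "so_weak_sharp_min f Phi S xb \<kappa> \<delta>"
  shows "\<forall>x \<in> S \<inter> ball xb \<delta>. \<forall>d. \<forall>l :: real^'m.
           (Dg x d \<in> tangent_cone K (g x) \<and> Df x d \<le> 0) \<longrightarrow>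
           (\<forall>v. Df x v + Dg x v \<bullet> l = 0) \<longrightarrow>
           support_fun (blinfun_apply (Dg x) ` asymp_second_tangent_cone Phi x d) l \<le> 0
         \<and> ereal (D2f x d d + D2g x d d \<bullet> l)
             - support_fun ((\<lambda>w. Dg x w + D2g x d d) ` second_tangent_set Phi x d) l
           \<ge> ereal (2 * \<kappa> * (infdist d (tangent_cone S x))\<^sup>2)"
proof (intro ballI allI impI conjI)
  have C2_f: "C2_real_function f Df D2f"
    using f_D f_D2 f_C2 by unfold_locales
  fix x d and l :: "real^'m"
  assume x: "x \<in> S \<inter> ball xb \<delta>"
    and critical: "Dg x d \<in> tangent_cone K (g x) \<and> Df x d \<le> 0"
    and stationary: "\<forall>v. Df x v + Dg x v \<bullet> l = 0"
  have min: "\<And>y. y \<in> Phi \<Longrightarrow> f x \<le> f y"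
    using x S_def by auto
  have "xb \<in> Phi" "\<kappa> > 0"
    and sharp_xb: "\<And>y. y \<in> Phi \<inter> ball xb \<delta> \<Longrightarrow> f xb + \<kappa> * (infdist y S)\<^sup>2 \<le> f y"
    using wsm unfolding so_weak_sharp_min_def by auto
  have sharp: "f x + \<kappa> * (infdist y S)\<^sup>2 \<le> f y" if "y \<in> Phi \<inter> ball xb \<delta>" for y
    using sharp_xb[OF that] min[OF \<open>xb \<in> Phi\<close>] by linarith
  have multiplier: "l \<bullet> Dg x w = - Df x w" for w
    using stationary[rule_format, of w] by (simp add: inner_commute eq_neg_iff_add_eq_0 add.commute)
  show "support_fun (blinfun_apply (Dg x) ` asymp_second_tangent_cone Phi x d) l \<le> 0"
    unfolding support_fun_def
    using C2_real_function.minimizer_asymp_second_tangent_derivative_nonneg[OF C2_f min] critical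
    by (auto intro!: SUP_least simp: multiplier)
  have bound: "2 * \<kappa> * (infdist d (tangent_cone S x))\<^sup>2 \<le> D2f x d d + Df x w"
    if "w \<in> second_tangent_set Phi x d" for w
    using sharp_minimizer_second_tangent_bound[OF C2_f min _ open_ball _ sharp \<open>\<kappa> > 0\<close> S_ne that]
      critical x by blast
  have "support_fun ((\<lambda>w. Dg x w + D2g x d d) ` second_tangent_set Phi x d) l
      \<le> ereal (D2f x d d + D2g x d d \<bullet> l - 2 * \<kappa> * (infdist d (tangent_cone S x))\<^sup>2)"
    unfolding support_fun_def
    by (rule SUP_least) (auto simp: inner_add_right inner_commute multiplier dest!: bound)
  then show "ereal (D2f x d d + D2g x d d \<bullet> l)
      - support_fun ((\<lambda>w. Dg x w + D2g x d d) ` second_tangent_set Phi x d) l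
    \<ge> ereal (2 * \<kappa> * (infdist d (tangent_cone S x))\<^sup>2)"
    by (cases "support_fun ((\<lambda>w. Dg x w + D2g x d d) ` second_tangent_set Phi x d) l") auto
qed

end
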